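(* (i) The equation $x^4-y^4=iz^2$ has only trivial solutions in Gaussian integers $x,y,z\in\mathbb{Z}[i]$, i.e. every solution satisfies $xyz=0$. (ii) The only nontrivial solutions $(x,y,z)\in\mathbb{Z}[i]^3$ (i.e. with $xyz\neq 0$) of the equation $x^4+y^4=iz^2$ satisfying $\gcd(x,y,z)=1$ are the triples $(x,y,z)$ with $x,y\in\{\pm i,\pm 1\}$ and $z=\pm i(1+i)$.
   Context: Here $i=\sqrt{-1}$ and $\mathbb{Z}[i]$ denotes the ring of Gaussian integers. A solution $(x,y,z)$ is called trivial if $xyz=0$. *)

theory Defs
  imports Complex_Main
begin

definition gauss_ints :: "complex set" where
  "gauss_ints = {of_int a + of_int b * \<i> | a b. True}"

definition gdvd :: "complex \<Rightarrow> complex \<Rightarrow> bool" where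
  "gdvd d x \<longleftrightarrow> (\<exists>k\<in>gauss_ints. x = d * k)"

definition gunit :: "complex \<Rightarrow> bool" where
  "gunit u \<longleftrightarrow> u \<in> gauss_ints \<and> gdvd u 1"

definition gcoprime3 :: "complex \<Rightarrow> complex \<Rightarrow> complex \<Rightarrow> bool" where
  "gcoprime3 x y z \<longleftrightarrow>
     (\<forall>d\<in>gauss_ints. gdvd d x \<and> gdvd d y \<and> gdvd d z \<longrightarrow> gunit d)"

end

(*
  Everything happens in the Euclidean ring Z[i], with the prime 1 + i above 2 playing the role
  that 2 plays in Fermat's descent over Z. The core is Hilbert's theorem that x^4 + e y^4 = w^2
  (e = 1 or e = -1) has only trivial solutions: a primitive solution with x or y divisible by
  1 + i factors (w - x^2)(w + x^2) = e y^4 into coprime fourth powers up to units, and one with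
  x, y both prime to 1 + i forces e = -1 and, after replacing y by i y, x^2 = a + 2b,
  y^2 = a - 2b with coprime squares a, b up to units. Either way one gets a smaller solution,
  measured by |x|^4 + |y|^4.

  (i) For x^4 - y^4 = i z^2 the same substitution gives i z^2 = 8ab, and (xy)^2 = a^2 - 4b^2
  becomes m^4 + (1 + i)^4 n^4 up to a unit square, which Hilbert's theorem forbids.
  (ii) For x^4 + y^4 = i z^2 with z = (1 + i) w one has
  (x^4 - y^4)^2 = (1 + i)^4 ((xy)^4 - w^4), so Hilbert's theorem gives x^4 = y^4; coprimality
  then makes x and y units and z^2 = -2i.
*)

theory Submission
  imports Defs "HOL-Computational_Algebra.Euclidean_Algorithm"
begin

section \<open>Coprime factorisations in GCD rings\<close>

lemma coprime_mult_eq_power_split: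
  fixes a b c :: "'a::semiring_gcd"
  assumes cop: "coprime a b" and eq: "a * b = c ^ n" and "n > 0" and "c \<noteq> 0"
  obtains u v s t where "u * v = 1" "a = u * s ^ n" "b = v * t ^ n" "c = s * t"
proof -
  define s where "s = gcd a c"
  obtain t where t: "c = s * t"
    unfolding s_def by (rule dvdE[OF gcd_dvd2])
  have "s \<noteq> 0"
    using \<open>c \<noteq> 0\<close> t by auto
  have "coprime s b"
    using coprime_divisors[OF gcd_dvd1 dvd_refl cop] by (simp add: s_def)
  then have "coprime (s ^ n) b"
    by simp
  moreover have "s ^ n dvd a * b"
    unfolding eq t by (simp add: power_mult_distrib)
  ultimately have "s ^ n dvd a"
    by (simp add: coprime_dvd_mult_left_iff)
  then obtain u where u: "a = u * s ^ n"
    by (metis dvdE mult.commute)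
  have "a dvd gcd (a ^ n) (c ^ n)"
    using \<open>n > 0\<close> by (simp flip: eq)
  then have "a dvd s ^ n"
    by (simp add: gcd_exp_weak s_def)
  then obtain v where "s ^ n = a * v" ..
  with u have "s ^ n * 1 = s ^ n * (u * v)"
    by (metis mult.assoc mult.commute mult_1_right)
  then have uv: "u * v = 1"
    using \<open>s \<noteq> 0\<close> by (metis mult_cancel_left power_not_zero)
  have "s ^ n * (u * b) = s ^ n * t ^ n"
    using eq u t by (simp add: power_mult_distrib mult_ac)
  then have "u * b = t ^ n"
    using \<open>s \<noteq> 0\<close> by simp
  then have "b = v * t ^ n"
    using uv by (metis mult.assoc mult.commute mult_1)
  with uv u t show thesis
    using that by blast
qed

lemma quartic_eq_divide_gcd:
  fixes x y z e k :: "'a::semiring_gcd"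
  assumes eq: "x ^ 4 + e * y ^ 4 = k * z ^ 2" and "is_unit k" and "x \<noteq> 0"
  obtains x' y' z' where "x = gcd x y * x'" "y = gcd x y * y'" "z = gcd x y ^ 2 * z'"
    "coprime x' y'" "x' ^ 4 + e * y' ^ 4 = k * z' ^ 2"
proof -
  define g where "g = gcd x y"
  have "g \<noteq> 0"
    using \<open>x \<noteq> 0\<close> by (simp add: g_def)
  obtain x' where x': "x = g * x'"
    unfolding g_def by (rule dvdE[OF gcd_dvd1])
  obtain y' where y': "y = g * y'"
    unfolding g_def by (rule dvdE[OF gcd_dvd2])
  note xy = x' y'
  have "coprime (x div g) (y div g)"
    unfolding g_def using \<open>x \<noteq> 0\<close> by (intro div_gcd_coprime) simp
  then have "coprime x' y'"
    using xy \<open>g \<noteq> 0\<close> by simp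
  have eq': "k * z ^ 2 = (g ^ 2) ^ 2 * (x' ^ 4 + e * y' ^ 4)"
    using eq xy by (simp add: power_mult_distrib algebra_simps flip: power_mult)
  then have "(g ^ 2) ^ 2 dvd k * z ^ 2"
    by simp
  then have "(g ^ 2) ^ 2 dvd z ^ 2"
    using \<open>is_unit k\<close> by (simp only: dvd_mult_unit_iff')
  then have "g ^ 2 dvd z"
    by (metis pow_divides_pow_iff zero_less_numeral)
  then obtain z' where z: "z = g ^ 2 * z'" ..
  have "(g ^ 2) ^ 2 * (x' ^ 4 + e * y' ^ 4) = (g ^ 2) ^ 2 * (k * z' ^ 2)"
    using eq' z by (simp add: power_mult_distrib algebra_simps)
  then have "x' ^ 4 + e * y' ^ 4 = k * z' ^ 2"
    using \<open>g \<noteq> 0\<close> by simp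
  with \<open>coprime x' y'\<close> show thesis
    by (rule that[OF x'[unfolded g_def] y'[unfolded g_def] z[unfolded g_def]])
qed

lemma coprime_if_coprime_add_diff:
  fixes a b c x y :: "'a::semiring_gcd"
  assumes "coprime x y" "x = a + c * b" "a = y + c * b"
  shows "coprime a b"
proof (rule coprimeI)
  fix d
  assume "d dvd a" "d dvd b"
  then have "d dvd c * b"
    by simp
  with \<open>d dvd a\<close> have "d dvd x" "d dvd y"
    using assms(2,3) dvd_add_left_iff[of d "c * b" y] by simp_all
  with \<open>coprime x y\<close> show "is_unit d"
    using coprime_common_divisor by blast
qed

lemma power2_eq_power2_mult_obtain:
  fixes w p c :: "'a::semiring_gcd"
  assumes "w ^ 2 = p ^ 2 * c" and "p \<noteq> 0"
  obtains d where "w = p * d" "c = d ^ 2"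
proof -
  have "p ^ 2 dvd w ^ 2"
    using assms(1) by simp
  then have "p dvd w"
    by simp
  then obtain d where d: "w = p * d" ..
  with assms have "p ^ 2 * c = p ^ 2 * d ^ 2"
    by (simp add: power_mult_distrib)
  with \<open>p \<noteq> 0\<close> have "c = d ^ 2"
    by simp
  with d show thesis
    by (rule that)
qed

section \<open>The Gaussian integers as a Euclidean ring\<close>

datatype gauss_int = Gauss_Int (ReZ: int) (ImZ: int)

lemma gauss_int_eq_iff: "x = y \<longleftrightarrow> ReZ x = ReZ y \<and> ImZ x = ImZ y"
  by (cases x; cases y) auto

instantiation gauss_int :: comm_ring_1
begin
definition "0 = Gauss_Int 0 0"
definition "1 = Gauss_Int 1 0"
definition "x + y = Gauss_Int (ReZ x + ReZ y) (ImZ x + ImZ y)"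
definition "x - y = Gauss_Int (ReZ x - ReZ y) (ImZ x - ImZ y)"
definition "- x = Gauss_Int (- ReZ x) (- ImZ x)"
definition "x * y = Gauss_Int (ReZ x * ReZ y - ImZ x * ImZ y) (ReZ x * ImZ y + ImZ x * ReZ y)"
instance
  by intro_classes
    (auto simp: gauss_int_eq_iff zero_gauss_int_def one_gauss_int_def plus_gauss_int_def
      minus_gauss_int_def uminus_gauss_int_def times_gauss_int_def algebra_simps)
end

lemma gauss_int_simps [simp]:
  "ReZ 0 = 0" "ImZ 0 = 0" "ReZ 1 = 1" "ImZ 1 = 0"
  "ReZ (x + y) = ReZ x + ReZ y" "ImZ (x + y) = ImZ x + ImZ y"
  "ReZ (x - y) = ReZ x - ReZ y" "ImZ (x - y) = ImZ x - ImZ y"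
  "ReZ (- x) = - ReZ x" "ImZ (- x) = - ImZ x"
  "ReZ (x * y) = ReZ x * ReZ y - ImZ x * ImZ y" "ImZ (x * y) = ReZ x * ImZ y + ImZ x * ReZ y"
  by (simp_all add: zero_gauss_int_def one_gauss_int_def plus_gauss_int_def minus_gauss_int_def
      uminus_gauss_int_def times_gauss_int_def)

lemma ReZ_of_nat [simp]: "ReZ (of_nat n) = of_nat n" and ImZ_of_nat [simp]: "ImZ (of_nat n) = 0"
  by (induction n) simp_all

lemma ReZ_of_int [simp]: "ReZ (of_int n) = n" and ImZ_of_int [simp]: "ImZ (of_int n) = 0"
  by (cases n; simp)+

lemma ReZ_numeral [simp]: "ReZ (numeral n) = numeral n"
  and ImZ_numeral [simp]: "ImZ (numeral n) = 0"
  using ReZ_of_nat[of "numeral n"] ImZ_of_nat[of "numeral n"] by simp_all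

definition gauss_norm :: "gauss_int \<Rightarrow> int" where
  "gauss_norm z = ReZ z ^ 2 + ImZ z ^ 2"

definition gauss_cnj :: "gauss_int \<Rightarrow> gauss_int" where
  "gauss_cnj z = Gauss_Int (ReZ z) (- ImZ z)"

lemma ReZ_gauss_cnj [simp]: "ReZ (gauss_cnj z) = ReZ z"
  and ImZ_gauss_cnj [simp]: "ImZ (gauss_cnj z) = - ImZ z"
  by (simp_all add: gauss_cnj_def)

lemma gauss_norm_gauss_cnj [simp]: "gauss_norm (gauss_cnj z) = gauss_norm z"
  by (simp add: gauss_norm_def)

lemma gauss_norm_mult: "gauss_norm (a * b) = gauss_norm a * gauss_norm b"
  by (simp add: gauss_norm_def power2_eq_square algebra_simps)

lemma gauss_norm_1 [simp]: "gauss_norm 1 = 1"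
  by (simp add: gauss_norm_def)

lemma gauss_norm_nonneg [simp]: "gauss_norm z \<ge> 0"
  by (simp add: gauss_norm_def)

lemma gauss_norm_eq_0_iff [simp]: "gauss_norm z = 0 \<longleftrightarrow> z = 0"
  by (simp add: gauss_norm_def gauss_int_eq_iff sum_power2_eq_zero_iff)

lemma gauss_norm_pos: "z \<noteq> 0 \<Longrightarrow> gauss_norm z > 0"
  using gauss_norm_nonneg[of z] gauss_norm_eq_0_iff[of z] by linarith

lemma mult_gauss_cnj: "z * gauss_cnj z = of_int (gauss_norm z)"
  by (simp add: gauss_int_eq_iff gauss_norm_def power2_eq_square)

instance gauss_int :: idom
proof
  fix a b :: gauss_int
  assume "a \<noteq> 0" "b \<noteq> 0"
  then have "gauss_norm (a * b) \<noteq> 0"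
    by (simp add: gauss_norm_mult)
  then show "a * b \<noteq> 0"
    by auto
qed

definition round_div :: "int \<Rightarrow> int \<Rightarrow> int" where
  "round_div p q = (2 * p + q) div (2 * q)"

lemma round_div_mult_self: "q > 0 \<Longrightarrow> round_div (k * q) q = k"
proof -
  assume q: "q > 0"
  have "round_div (k * q) q = (q + k * (2 * q)) div (2 * q)"
    unfolding round_div_def by (simp add: algebra_simps)
  also have "\<dots> = k"
    using q by (simp add: div_pos_pos_trivial)
  finally show ?thesis .
qed

lemma round_div_remainder_bound: "q > 0 \<Longrightarrow> \<bar>2 * (p - q * round_div p q)\<bar> \<le> q"
proof -
  assume q: "q > 0"
  define r where "r = round_div p q"
  have "(2 * p + q) div (2 * q) * (2 * q) + (2 * p + q) mod (2 * q) = 2 * p + q"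
    by (rule div_mult_mod_eq)
  moreover have "(2 * p + q) mod (2 * q) \<ge> 0" "(2 * p + q) mod (2 * q) < 2 * q"
    using q by simp_all
  ultimately have "r * (2 * q) \<le> 2 * p + q" "2 * p + q < (r + 1) * (2 * q)"
    by (simp_all add: r_def round_div_def distrib_right)
  then show ?thesis
    by (simp add: r_def[symmetric] algebra_simps abs_le_iff)
qed

text \<open>Division rounds both components of the exact quotient
  \<open>x / y = x (gauss_cnj y) / gauss_norm y\<close> to the nearest integer, so that the remainder has
  smaller norm than the divisor.\<close>

instantiation gauss_int :: idom_modulo
begin
definition "x div y = Gauss_Int (round_div (ReZ (x * gauss_cnj y)) (gauss_norm y))
                                (round_div (ImZ (x * gauss_cnj y)) (gauss_norm y))"
definition "x mod y = x - (x div (y::gauss_int)) * y"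
instance
proof
  fix x y :: gauss_int
  show "x div 0 = 0"
    by (simp add: divide_gauss_int_def gauss_int_eq_iff round_div_def gauss_norm_def)
  show "x div y * y + x mod y = x"
    by (simp add: modulo_gauss_int_def)
  assume "y \<noteq> 0"
  moreover have "x * y * gauss_cnj y = x * of_int (gauss_norm y)"
    by (simp add: mult_gauss_cnj mult.assoc)
  ultimately show "x * y div y = x"
    using gauss_norm_pos
    by (simp add: divide_gauss_int_def gauss_int_eq_iff round_div_mult_self mult.commute)
qed
end

lemma sum_squares_lt_square:
  fixes a b q :: int
  assumes "\<bar>2 * a\<bar> \<le> q" "\<bar>2 * b\<bar> \<le> q" "q > 0"
  shows "a ^ 2 + b ^ 2 < q ^ 2"
proof -
  have "(2 * a) ^ 2 \<le> q ^ 2" "(2 * b) ^ 2 \<le> q ^ 2"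
    using assms by (metis abs_le_square_iff abs_of_pos)+
  then show ?thesis
    using assms(3) by (simp add: power_mult_distrib) (smt (verit) zero_less_power)
qed

instantiation gauss_int :: euclidean_ring
begin
definition "euclidean_size x = nat (gauss_norm x)"
instance
proof
  show "euclidean_size (0::gauss_int) = 0"
    by (simp add: euclidean_size_gauss_int_def gauss_norm_def)
next
  fix x y :: gauss_int
  assume "y \<noteq> 0"
  define Y where "Y = gauss_norm y"
  define R where "R = ReZ (x * gauss_cnj y)"
  define I where "I = ImZ (x * gauss_cnj y)"
  have Y: "Y > 0"
    using \<open>y \<noteq> 0\<close> by (simp add: Y_def gauss_norm_pos)
  have "x mod y * gauss_cnj y = x * gauss_cnj y - x div y * of_int Y"
    by (simp add: modulo_gauss_int_def Y_def mult_gauss_cnj[symmetric] algebra_simps)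
  moreover have "ReZ (x div y) = round_div R Y" "ImZ (x div y) = round_div I Y"
    by (simp_all add: divide_gauss_int_def R_def I_def Y_def)
  moreover have "gauss_norm (z - w * of_int Y) = (ReZ z - Y * ReZ w) ^ 2 + (ImZ z - Y * ImZ w) ^ 2"
    for z w
    by (simp add: gauss_norm_def algebra_simps)
  ultimately have "gauss_norm (x mod y * gauss_cnj y)
      = (R - Y * round_div R Y) ^ 2 + (I - Y * round_div I Y) ^ 2"
    by (simp add: R_def I_def)
  then have "gauss_norm (x mod y) * Y = (R - Y * round_div R Y) ^ 2 + (I - Y * round_div I Y) ^ 2"
    by (simp add: gauss_norm_mult Y_def)
  also have "\<dots> < Y ^ 2"
    using Y by (intro sum_squares_lt_square round_div_remainder_bound)
  finally show "euclidean_size (x mod y) < euclidean_size y"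
    using Y by (simp add: euclidean_size_gauss_int_def Y_def power2_eq_square)
next
  fix x y :: gauss_int
  assume "y \<noteq> 0"
  then have "gauss_norm x * 1 \<le> gauss_norm x * gauss_norm y"
    using gauss_norm_pos[of y] by (intro mult_left_mono) simp_all
  then show "euclidean_size x \<le> euclidean_size (x * y)"
    by (simp add: euclidean_size_gauss_int_def gauss_norm_mult)
qed
end

definition gauss_i :: gauss_int where
  "gauss_i = Gauss_Int 0 1"

lemma ReZ_gauss_i [simp]: "ReZ gauss_i = 0" and ImZ_gauss_i [simp]: "ImZ gauss_i = 1"
  by (simp_all add: gauss_i_def)

lemma gauss_i_squared: "gauss_i ^ 2 = -1"
  by (simp add: gauss_int_eq_iff power2_eq_square)

lemma gauss_i_mult_gauss_i: "gauss_i * (gauss_i * z) = - z"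
  by (simp add: gauss_int_eq_iff)

lemma gauss_i_mult_power2: "(gauss_i * z) ^ 2 = - (z ^ 2)"
  by (simp add: power_mult_distrib gauss_i_squared)

lemma gauss_i_nonzero [simp]: "gauss_i \<noteq> 0"
  by (simp add: gauss_int_eq_iff)

lemma gauss_norm_eq_1_iff: "gauss_norm z = 1 \<longleftrightarrow> z = 1 \<or> z = -1 \<or> z = gauss_i \<or> z = -gauss_i"
proof
  assume "gauss_norm z = 1"
  then have sq: "ReZ z ^ 2 + ImZ z ^ 2 = 1"
    by (simp add: gauss_norm_def)
  then have "ReZ z ^ 2 \<le> 1" "ImZ z ^ 2 \<le> 1"
    using zero_le_power2[of "ReZ z"] zero_le_power2[of "ImZ z"] by linarith+
  then have "\<bar>ReZ z\<bar> \<le> 1" "\<bar>ImZ z\<bar> \<le> 1"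
    by (simp_all add: abs_square_le_1)
  then have "ReZ z \<in> {-1, 0, 1}" "ImZ z \<in> {-1, 0, 1}"
    by auto
  with sq show "z = 1 \<or> z = -1 \<or> z = gauss_i \<or> z = -gauss_i"
    by (auto simp: gauss_int_eq_iff)
qed (auto simp: gauss_norm_def)

lemma is_unit_iff_gauss_norm_eq_1: "is_unit z \<longleftrightarrow> gauss_norm z = 1"
proof
  assume "is_unit z"
  then obtain w where "1 = z * w"
    by blast
  then have "gauss_norm z * gauss_norm w = gauss_norm 1"
    by (simp only: gauss_norm_mult[symmetric])
  then have "gauss_norm z * gauss_norm w = 1"
    by (simp add: gauss_norm_def)
  then show "gauss_norm z = 1"
    using gauss_norm_nonneg[of z] by (simp add: zmult_eq_1_iff)
next
  assume "gauss_norm z = 1"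
  then have "z * gauss_cnj z = 1"
    by (simp add: mult_gauss_cnj)
  then show "is_unit z"
    by (metis dvd_triv_left)
qed

lemma is_unit_gauss_int_iff: "is_unit z \<longleftrightarrow> z = 1 \<or> z = -1 \<or> z = gauss_i \<or> z = -gauss_i"
  by (simp add: is_unit_iff_gauss_norm_eq_1 gauss_norm_eq_1_iff)

lemma gauss_norm_gauss_i [simp]: "gauss_norm gauss_i = 1"
  by (simp add: gauss_norm_def)

lemma is_unit_gauss_i [simp]: "is_unit gauss_i"
  by (simp add: is_unit_iff_gauss_norm_eq_1)

lemma gauss_norm_unit: "is_unit u \<Longrightarrow> gauss_norm u = 1"
  by (simp add: is_unit_iff_gauss_norm_eq_1)

lemma gauss_norm_ge_2: "p \<noteq> 0 \<Longrightarrow> \<not> is_unit p \<Longrightarrow> gauss_norm p \<ge> 2"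
  using gauss_norm_pos[of p] is_unit_iff_gauss_norm_eq_1[of p] by linarith

definition gauss_unit_factor :: "gauss_int \<Rightarrow> gauss_int" where
  "gauss_unit_factor z =
     (if z = 0 then 0
      else if ReZ z > 0 \<and> ImZ z \<ge> 0 then 1
      else if ReZ z \<le> 0 \<and> ImZ z > 0 then gauss_i
      else if ReZ z < 0 \<and> ImZ z \<le> 0 then -1
      else -gauss_i)"

lemma gauss_unit_factor_uminus: "gauss_unit_factor (- z) = - gauss_unit_factor z"
  by (simp add: gauss_unit_factor_def gauss_int_eq_iff; linarith)

lemma gauss_unit_factor_gauss_i_mult: "gauss_unit_factor (gauss_i * z) = gauss_i * gauss_unit_factor z"
  by (simp add: gauss_unit_factor_def gauss_int_eq_iff; linarith)

lemma gauss_norm_gauss_unit_factor: "z \<noteq> 0 \<Longrightarrow> gauss_norm (gauss_unit_factor z) = 1"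
  by (simp add: gauss_unit_factor_def gauss_norm_def)

instantiation gauss_int :: normalization_semidom
begin
definition "unit_factor z = gauss_unit_factor z"
definition "normalize z = gauss_cnj (gauss_unit_factor z) * z"
instance
proof
  show "unit_factor (0::gauss_int) = 0"
    by (simp add: unit_factor_gauss_int_def gauss_unit_factor_def)
  show "normalize (0::gauss_int) = 0"
    by (simp add: normalize_gauss_int_def)
next
  fix a :: gauss_int
  assume "is_unit a"
  then show "unit_factor a = a"
    by (auto simp: is_unit_gauss_int_iff unit_factor_gauss_int_def gauss_unit_factor_def gauss_int_eq_iff)
next
  fix a :: gauss_int
  assume "a \<noteq> 0"
  then show "is_unit (unit_factor a)"
    by (simp add: unit_factor_gauss_int_def is_unit_iff_gauss_norm_eq_1 gauss_norm_gauss_unit_factor)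
next
  fix a b :: gauss_int
  assume "is_unit a"
  then show "unit_factor (a * b) = a * unit_factor b"
    using gauss_unit_factor_uminus[of b] gauss_unit_factor_gauss_i_mult[of b]
      gauss_unit_factor_uminus[of "gauss_i * b"]
    by (auto simp: is_unit_gauss_int_iff unit_factor_gauss_int_def)
next
  fix a :: gauss_int
  show "unit_factor a * normalize a = a"
  proof (cases "a = 0")
    case False
    then have "gauss_unit_factor a * gauss_cnj (gauss_unit_factor a) = 1"
      by (simp add: mult_gauss_cnj gauss_norm_gauss_unit_factor)
    then show ?thesis
      by (simp add: unit_factor_gauss_int_def normalize_gauss_int_def mult.assoc[symmetric])
  qed (simp add: normalize_gauss_int_def)
qed
end

instance gauss_int :: normalization_euclidean_semiring ..

instantiation gauss_int :: euclidean_ring_gcd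
begin
definition "gcd_gauss_int = (Euclidean_Algorithm.gcd :: gauss_int \<Rightarrow> _)"
definition "lcm_gauss_int = (Euclidean_Algorithm.lcm :: gauss_int \<Rightarrow> _)"
definition "Gcd_gauss_int = (Euclidean_Algorithm.Gcd :: gauss_int set \<Rightarrow> _)"
definition "Lcm_gauss_int = (Euclidean_Algorithm.Lcm :: gauss_int set \<Rightarrow> _)"
instance
  by standard (simp_all add: gcd_gauss_int_def lcm_gauss_int_def Gcd_gauss_int_def Lcm_gauss_int_def)
end

lemma power4_eq_power2_power2: "x ^ 4 = (x ^ 2) ^ 2" for x :: "'a::monoid_mult"
  by (simp flip: power_mult)

lemma ReZ_power2: "ReZ (z ^ 2) = ReZ z ^ 2 - ImZ z ^ 2"
  and ImZ_power2: "ImZ (z ^ 2) = 2 * ReZ z * ImZ z"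
  by (simp_all add: power2_eq_square)

lemma gauss_norm_power: "gauss_norm (z ^ n) = gauss_norm z ^ n"
  by (induction n) (simp_all add: gauss_norm_mult)

lemma gauss_norm_uminus [simp]: "gauss_norm (- z) = gauss_norm z"
  by (simp add: gauss_norm_def)

lemma gauss_norm_gauss_i_mult [simp]: "gauss_norm (gauss_i * z) = gauss_norm z"
  by (simp add: gauss_norm_def)

lemma gauss_norm_numeral [simp]: "gauss_norm (numeral k) = numeral k ^ 2"
  by (simp add: gauss_norm_def)

lemma of_int_dvd_gauss_int_iff: "of_int k dvd z \<longleftrightarrow> k dvd ReZ z \<and> k dvd ImZ z"
proof
  assume "of_int k dvd z"
  then show "k dvd ReZ z \<and> k dvd ImZ z"
    by (auto elim!: dvdE)
next
  assume "k dvd ReZ z \<and> k dvd ImZ z"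
  then obtain a b where "ReZ z = k * a" "ImZ z = k * b"
    by (auto elim!: dvdE)
  then have "z = of_int k * Gauss_Int a b"
    by (simp add: gauss_int_eq_iff)
  then show "of_int k dvd z"
    by simp
qed

lemma numeral_dvd_gauss_int_iff:
  "numeral k dvd z \<longleftrightarrow> (numeral k :: int) dvd ReZ z \<and> (numeral k :: int) dvd ImZ z"
  using of_int_dvd_gauss_int_iff[of "numeral k" z] by simp

lemma is_unit_power2_cases: "is_unit u \<Longrightarrow> u ^ 2 = 1 \<or> u ^ 2 = -1" for u :: gauss_int
  by (auto simp: is_unit_gauss_int_iff gauss_int_eq_iff power2_eq_square)

lemma is_unit_power4: "is_unit u \<Longrightarrow> u ^ 4 = 1" for u :: gauss_int
  unfolding power4_eq_power2_power2 by (metis is_unit_power2_cases power2_minus power_one)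

lemma unit_inverse_power2:
  fixes u v :: gauss_int
  assumes "u * v = 1"
  shows "v ^ 2 = u ^ 2"
proof -
  have "u ^ 4 = 1"
    using assms by (intro is_unit_power4) (metis dvd_triv_left)
  then have "v ^ 2 = (u * v) ^ 2 * u ^ 2"
    by (simp add: power_mult_distrib power4_eq_xxxx power2_eq_square mult_ac)
  with assms show ?thesis
    by simp
qed

section \<open>The prime 1 + i\<close>

definition one_plus_i :: gauss_int where
  "one_plus_i = Gauss_Int 1 1"

lemma ReZ_one_plus_i [simp]: "ReZ one_plus_i = 1" and ImZ_one_plus_i [simp]: "ImZ one_plus_i = 1"
  by (simp_all add: one_plus_i_def)

lemma one_plus_i_nonzero [simp]: "one_plus_i \<noteq> 0"
  by (simp add: gauss_int_eq_iff)

lemma gauss_norm_one_plus_i [simp]: "gauss_norm one_plus_i = 2"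
  by (simp add: gauss_norm_def)

lemma one_plus_i_dvd_iff: "one_plus_i dvd z \<longleftrightarrow> even (ReZ z + ImZ z)"
proof
  assume "one_plus_i dvd z"
  then obtain w where "z = one_plus_i * w" ..
  then show "even (ReZ z + ImZ z)"
    by simp
next
  assume even: "even (ReZ z + ImZ z)"
  then obtain a where a: "ReZ z + ImZ z = 2 * a" ..
  from even have "even (ImZ z - ReZ z)"
    by (metis even_add even_diff)
  then obtain b where "ImZ z - ReZ z = 2 * b" ..
  with a have "z = one_plus_i * Gauss_Int a b"
    by (simp add: gauss_int_eq_iff; linarith)
  then show "one_plus_i dvd z"
    by simp
qed

lemma prime_elem_one_plus_i: "prime_elem one_plus_i"
proof (rule prime_elemI)
  show "one_plus_i \<noteq> 0"
    by simp
  show "\<not> one_plus_i dvd 1"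
    by (simp add: is_unit_iff_gauss_norm_eq_1)
next
  fix a b
  assume "one_plus_i dvd a * b"
  then have "even (ReZ (a * b) + ImZ (a * b))"
    by (simp only: one_plus_i_dvd_iff)
  moreover have "(ReZ a + ImZ a) * (ReZ b + ImZ b) = ReZ (a * b) + ImZ (a * b) + 2 * (ImZ a * ImZ b)"
    by (simp add: algebra_simps)
  ultimately have "even ((ReZ a + ImZ a) * (ReZ b + ImZ b))"
    by (metis dvd_add dvd_triv_left)
  then show "one_plus_i dvd a \<or> one_plus_i dvd b"
    by (simp add: one_plus_i_dvd_iff)
qed

lemma one_plus_i_power2: "one_plus_i ^ 2 = 2 * gauss_i"
  by (simp add: gauss_int_eq_iff power2_eq_square)

lemma two_eq_one_plus_i_power2: "2 = - gauss_i * one_plus_i ^ 2"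
  by (simp add: gauss_int_eq_iff power2_eq_square)

lemma one_plus_i_power4: "one_plus_i ^ 4 = - 4"
  by (simp add: power4_eq_power2_power2 one_plus_i_power2 gauss_int_eq_iff power2_eq_square)

lemma eight_eq_one_plus_i_power6: "8 = one_plus_i ^ 6 * gauss_i"
proof -
  have "one_plus_i ^ 6 = (one_plus_i ^ 2) ^ 3"
    by (simp flip: power_mult)
  then show ?thesis
    by (simp add: one_plus_i_power2 gauss_int_eq_iff power3_eq_cube)
qed

lemma even_ImZ_power2: "even (ImZ (z ^ 2))"
  by (simp add: ImZ_power2)

lemma even_ReZ_power2_iff: "even (ReZ (z ^ 2)) \<longleftrightarrow> one_plus_i dvd z"
proof -
  have "ReZ (z ^ 2) = (ReZ z + ImZ z) * (ReZ z - ImZ z)"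
    by (simp add: ReZ_power2 power2_eq_square algebra_simps)
  then show ?thesis
    by (simp add: one_plus_i_dvd_iff)
qed

lemma even_ImZ_power4: "even (ImZ (z ^ 4))"
  unfolding power4_eq_power2_power2 by (rule even_ImZ_power2)

lemma even_ReZ_power4_iff: "even (ReZ (z ^ 4)) \<longleftrightarrow> one_plus_i dvd z"
  unfolding power4_eq_power2_power2 even_ReZ_power2_iff
  by (simp add: one_plus_i_dvd_iff even_ImZ_power2 even_ReZ_power2_iff)

lemma four_dvd_ImZ_power2:
  assumes "\<not> one_plus_i dvd z"
  shows "4 dvd ImZ (z ^ 2)"
proof -
  have "even (ReZ z * ImZ z)"
    using assms by (auto simp: one_plus_i_dvd_iff)
  then obtain k where k: "ReZ z * ImZ z = 2 * k" ..
  have "ImZ (z ^ 2) = 2 * (2 * k)"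
    unfolding ImZ_power2 mult.assoc k ..
  then show ?thesis
    by simp
qed

lemma power4_mod4:
  assumes "\<not> one_plus_i dvd z"
  shows "4 dvd ImZ (z ^ 4)" "ReZ (z ^ 4) mod 4 = 1"
proof -
  obtain s where s: "ImZ (z ^ 2) = 4 * s"
    using four_dvd_ImZ_power2[OF assms] ..
  have "odd (ReZ (z ^ 2))"
    using assms by (simp add: even_ReZ_power2_iff)
  then obtain r where r: "ReZ (z ^ 2) = 2 * r + 1" ..
  have "ReZ (z ^ 4) = 1 + 4 * (r ^ 2 + r - 4 * s ^ 2)"
    unfolding power4_eq_power2_power2 ReZ_power2[of "z ^ 2"] r s
    by (simp add: power2_eq_square algebra_simps)
  then show "ReZ (z ^ 4) mod 4 = 1"
    by presburger
  have "ImZ (z ^ 4) = 4 * (2 * (2 * r + 1) * s)"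
    unfolding power4_eq_power2_power2 ImZ_power2[of "z ^ 2"] r s
    by (simp add: algebra_simps)
  then show "4 dvd ImZ (z ^ 4)"
    by simp
qed

lemma ReZ_power2_mod4_neq_2: "ReZ (w ^ 2) mod 4 \<noteq> 2"
proof -
  have square_mod4: "a ^ 2 mod 4 = 0 \<or> a ^ 2 mod 4 = 1" for a :: int
  proof (cases "even a")
    case True
    then obtain k where "a = 2 * k" ..
    then have "a ^ 2 = 4 * k ^ 2"
      by (simp add: power2_eq_square)
    then show ?thesis
      by simp
  next
    case False
    then obtain k where "a = 2 * k + 1" ..
    then have "a ^ 2 = 1 + 4 * (k ^ 2 + k)"
      by (simp add: power2_eq_square algebra_simps)
    then show ?thesis
      by presburger
  qed
  have "ReZ (w ^ 2) mod 4 = (ReZ w ^ 2 mod 4 - ImZ w ^ 2 mod 4) mod 4"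
    by (simp add: ReZ_power2 mod_diff_eq)
  then show ?thesis
    using square_mod4[of "ReZ w"] square_mod4[of "ImZ w"] by auto
qed

lemma one_plus_i_dvd_if_quartic_eq:
  assumes eq: "x ^ 4 + e * y ^ 4 = k * z ^ 2"
    and e: "e = 1 \<or> e = -1" and k: "k = gauss_i \<or> k = - gauss_i"
  shows "one_plus_i dvd z"
proof -
  have "even (ImZ (x ^ 4 + e * y ^ 4))"
    using e even_ImZ_power4[of x] even_ImZ_power4[of y] by auto
  then have "even (ImZ (k * z ^ 2))"
    by (simp only: eq)
  then have "even (ReZ (z ^ 2))"
    using k by auto
  then show ?thesis
    by (simp add: even_ReZ_power2_iff)
qed

lemma coprime_quartic_eq_gauss_i_not_one_plus_i_dvd:
  assumes eq: "x ^ 4 + e * y ^ 4 = gauss_i * z ^ 2"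
    and e: "e = 1 \<or> e = -1" and "coprime x y"
  shows "\<not> one_plus_i dvd x" "\<not> one_plus_i dvd y"
proof -
  have "even (ReZ (gauss_i * z ^ 2))"
    using even_ImZ_power2[of z] by simp
  then have "even (ReZ (x ^ 4 + e * y ^ 4))"
    by (simp only: eq)
  then have "even (ReZ (x ^ 4)) \<longleftrightarrow> even (ReZ (y ^ 4))"
    using e even_ImZ_power4[of y] by auto
  then have "one_plus_i dvd x \<longleftrightarrow> one_plus_i dvd y"
    by (simp add: even_ReZ_power4_iff)
  moreover have "\<not> (one_plus_i dvd x \<and> one_plus_i dvd y)"
    using \<open>coprime x y\<close> prime_elem_not_unit[OF prime_elem_one_plus_i]
    coprime_common_divisor by blast
  ultimately show "\<not> one_plus_i dvd x" "\<not> one_plus_i dvd y"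
    by blast+
qed

lemma sum_fourth_powers_neq_square:
  assumes "\<not> one_plus_i dvd x" "\<not> one_plus_i dvd y"
  shows "x ^ 4 + y ^ 4 \<noteq> w ^ 2"
proof
  assume eq: "x ^ 4 + y ^ 4 = w ^ 2"
  have "ReZ (x ^ 4 + y ^ 4) mod 4 = (ReZ (x ^ 4) mod 4 + ReZ (y ^ 4) mod 4) mod 4"
    by (simp add: mod_add_eq)
  also have "\<dots> = 2"
    using assms by (simp add: power4_mod4)
  finally show False
    using ReZ_power2_mod4_neq_2[of w] by (simp add: eq)
qed

lemma four_dvd_diff_squares_up_to_gauss_i:
  assumes "\<not> one_plus_i dvd x" "\<not> one_plus_i dvd y"
  obtains y' where "y' = y \<or> y' = gauss_i * y" "4 dvd x ^ 2 - y' ^ 2"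
proof -
  have "4 dvd ImZ (x ^ 2)" "4 dvd ImZ (y ^ 2)" "odd (ReZ (x ^ 2))" "odd (ReZ (y ^ 2))"
    using assms by (simp_all add: four_dvd_ImZ_power2 even_ReZ_power2_iff)
  then have "4 dvd ReZ (x ^ 2) - ReZ (y ^ 2) \<and> 4 dvd ImZ (x ^ 2) - ImZ (y ^ 2) \<or>
             4 dvd ReZ (x ^ 2) + ReZ (y ^ 2) \<and> 4 dvd ImZ (x ^ 2) + ImZ (y ^ 2)"
    by presburger
  then have "4 dvd x ^ 2 - y ^ 2 \<or> 4 dvd x ^ 2 - (gauss_i * y) ^ 2"
    by (simp only: gauss_i_mult_power2 numeral_dvd_gauss_int_iff diff_minus_eq_add
        gauss_int_simps)
  then show thesis
    using that by blast
qed

lemma one_plus_i_power2_dvd_diff: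
  assumes p: "\<not> one_plus_i dvd p" and q: "\<not> one_plus_i dvd q"
    and eq: "(p - q) * (p + q) = e * y ^ 4" and y: "one_plus_i dvd y"
  shows "one_plus_i ^ 2 dvd p - q"
proof (rule ccontr)
  \<comment> \<open>otherwise \<open>p - q\<close> and \<open>p + q = (p - q) + 2 q\<close> are both divisible by \<open>1 + i\<close> exactly
     once, whereas \<open>(1 + i)\<^sup>4\<close> divides their product\<close>
  assume not_dvd: "\<not> one_plus_i ^ 2 dvd p - q"
  have "one_plus_i dvd p - q"
    using p q by (simp add: one_plus_i_dvd_iff)
  then obtain a where a: "p - q = one_plus_i * a" ..
  have a_odd: "\<not> one_plus_i dvd a"
    using not_dvd a by (auto simp: power2_eq_square)
  define b where "b = a - gauss_i * one_plus_i * q"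
  have b: "p + q = one_plus_i * b"
  proof -
    have "p + q = (p - q) + 2 * q"
      by simp
    also have "\<dots> = one_plus_i * b"
      unfolding a b_def two_eq_one_plus_i_power2 by (simp add: algebra_simps power2_eq_square)
    finally show ?thesis .
  qed
  have b_odd: "\<not> one_plus_i dvd b"
  proof
    assume "one_plus_i dvd b"
    then have "one_plus_i dvd b + gauss_i * one_plus_i * q"
      by simp
    with a_odd show False
      by (simp add: b_def)
  qed
  have "one_plus_i ^ 4 dvd e * y ^ 4"
    using y by (simp add: dvd_mult dvd_power_same)
  moreover have "e * y ^ 4 = one_plus_i ^ 2 * (a * b)"
    using eq a b by (simp add: power2_eq_square mult_ac)
  ultimately have "one_plus_i ^ 2 * one_plus_i ^ 2 dvd one_plus_i ^ 2 * (a * b)"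
    by (simp add: power_add[symmetric])
  then have "one_plus_i ^ 2 dvd a * b"
    by (subst (asm) dvd_mult_cancel_left) simp_all
  then have "one_plus_i dvd a * b"
    by (rule dvd_trans[rotated]) (simp add: power2_eq_square)
  then show False
    using a_odd b_odd prime_elem_one_plus_i by (simp add: prime_elem_dvd_mult_iff)
qed

section \<open>Descent for x^4 + e y^4 = w^2\<close>

lemma less_if_power2_le:
  fixes p q :: int
  assumes "p ^ 2 \<le> q" "1 < q"
  shows "p < q"
proof (rule ccontr)
  assume "\<not> p < q"
  then have "q * q \<le> p * p"
    using \<open>1 < q\<close> by (intro mult_mono) auto
  then have "q * q \<le> q * 1"
    using assms(1) by (simp add: power2_eq_square)
  then show False
    using \<open>1 < q\<close> mult_le_cancel_left_pos[of q q 1] by simp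
qed

lemma gauss_norm_parallelogram:
  "gauss_norm (a + b) + gauss_norm (a - b) = 2 * gauss_norm a + 2 * gauss_norm b"
  by (simp add: gauss_norm_def power2_eq_square algebra_simps)

lemma gauss_norm_add_le:
  assumes "gauss_norm a = p ^ 2" "gauss_norm b = q ^ 2" "p \<ge> 0" "q \<ge> 0"
  shows "gauss_norm (a + b) \<le> (p + q) ^ 2"
proof -
  define c where "c = ReZ a * ReZ b + ImZ a * ImZ b"
  have "c ^ 2 + (ReZ a * ImZ b - ImZ a * ReZ b) ^ 2 = gauss_norm a * gauss_norm b"
    by (simp add: c_def gauss_norm_def power2_eq_square algebra_simps)
  then have "c ^ 2 \<le> gauss_norm a * gauss_norm b"
    using zero_le_power2[of "ReZ a * ImZ b - ImZ a * ReZ b"] by linarith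
  then have "c ^ 2 \<le> (p * q) ^ 2"
    using assms(1,2) by (simp add: power_mult_distrib)
  then have "c \<le> p * q"
    using assms(3,4)
    by (metis abs_le_square_iff abs_of_nonneg le_cases order_trans abs_ge_self mult_nonneg_nonneg)
  have "gauss_norm (a + b) = gauss_norm a + gauss_norm b + 2 * c"
    by (simp add: gauss_norm_def c_def power2_eq_square algebra_simps)
  also have "\<dots> \<le> (p + q) ^ 2"
    using \<open>c \<le> p * q\<close> assms(1,2) by (simp add: power2_eq_square algebra_simps)
  finally show ?thesis .
qed

text \<open>Writing \<open>x\<^sup>2 = a + 2b\<close> and \<open>y\<^sup>2 = a - 2b\<close> turns the equation into
  \<open>k w\<^sup>2 = 8ab\<close> with coprime \<open>a, b\<close>, so both are squares up to units, while
  \<open>(x y)\<^sup>2 = a\<^sup>2 - 4b\<^sup>2\<close>.\<close>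

lemma diff_fourth_powers_factorisation:
  fixes x y w k :: gauss_int
  assumes eq: "x ^ 4 - y ^ 4 = k * w ^ 2" and "is_unit k" and cop: "coprime x y"
    and "4 dvd x ^ 2 - y ^ 2" and "w \<noteq> 0"
  obtains u m n where "is_unit u" "m \<noteq> 0" "n \<noteq> 0"
    "(x * y) ^ 2 = u ^ 2 * (m ^ 4 - k ^ 2 * (one_plus_i * n) ^ 4)"
    "gauss_norm (x ^ 2 + y ^ 2) = 4 * gauss_norm m ^ 2"
    "gauss_norm (x ^ 2 - y ^ 2) = 16 * gauss_norm n ^ 2"
proof -
  obtain b where b: "x ^ 2 - y ^ 2 = 4 * b"
    using \<open>4 dvd x ^ 2 - y ^ 2\<close> ..
  define a where "a = x ^ 2 - 2 * b"
  have xa: "x ^ 2 = a + 2 * b" and ya: "y ^ 2 = a - 2 * b" and sum: "x ^ 2 + y ^ 2 = 2 * a"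
    using b by (simp_all add: a_def algebra_simps)
  obtain k' where kk': "k * k' = 1"
    using \<open>is_unit k\<close> by (metis dvdE)
  have "k * w ^ 2 = (x ^ 2 + y ^ 2) * (x ^ 2 - y ^ 2)"
    unfolding eq[symmetric] by (simp add: power2_eq_square power4_eq_xxxx algebra_simps)
  also have "\<dots> = 8 * (a * b)"
    unfolding sum b by simp
  finally have kw: "k * w ^ 2 = 8 * (a * b)" .
  have "w ^ 2 = k' * (k * w ^ 2)"
    using kk' by (metis mult.assoc mult.commute mult_1)
  also have "\<dots> = one_plus_i ^ 6 * (a * (gauss_i * k' * b))"
    unfolding kw eight_eq_one_plus_i_power6 by (simp add: mult_ac)
  finally have "w ^ 2 = (one_plus_i ^ 3) ^ 2 * (a * (gauss_i * k' * b))"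
    by (simp flip: power_mult)
  then obtain d where d: "w = one_plus_i ^ 3 * d" and ad: "a * (gauss_i * k' * b) = d ^ 2"
    by (rule power2_eq_power2_mult_obtain) simp
  have "coprime (x ^ 2) (y ^ 2)"
    using cop by simp
  then have "coprime a b"
    by (rule coprime_if_coprime_add_diff[OF _ xa]) (use ya in simp)
  moreover have "is_unit (gauss_i * k')"
  proof -
    have "is_unit k'"
      using kk' by (metis dvd_triv_right)
    then show ?thesis
      by (simp add: is_unit_mult_iff is_unit_gauss_int_iff[of gauss_i])
  qed
  ultimately have "coprime a (gauss_i * k' * b)"
    by (metis coprime_mult_right_iff is_unit_right_imp_coprime)
  moreover have "d \<noteq> 0"
    using \<open>w \<noteq> 0\<close> d by simp
  ultimately obtain u v m n where uv: "u * v = 1" and am: "a = u * m ^ 2"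
    and bn: "gauss_i * k' * b = v * n ^ 2" and dmn: "d = m * n"
    by (rule coprime_mult_eq_power_split[OF _ ad zero_less_numeral])
  have "is_unit u"
    using uv by (metis dvd_triv_left)
  have "m \<noteq> 0" "n \<noteq> 0"
    using \<open>d \<noteq> 0\<close> dmn by auto
  have bv: "b = - gauss_i * k * v * n ^ 2"
  proof -
    have "b = (- gauss_i * k) * (gauss_i * k' * b)"
      using kk' by (simp add: gauss_int_eq_iff algebra_simps)
    then show ?thesis
      unfolding bn by (simp add: mult_ac)
  qed
  have "(x * y) ^ 2 = a ^ 2 - 4 * b ^ 2"
    unfolding power_mult_distrib xa ya by (simp add: power2_eq_square algebra_simps)
  also have "\<dots> = u ^ 2 * m ^ 4 + 4 * k ^ 2 * v ^ 2 * n ^ 4"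
  proof -
    have "a ^ 2 = u ^ 2 * m ^ 4" "b ^ 2 = gauss_i ^ 2 * k ^ 2 * v ^ 2 * n ^ 4"
      unfolding am bv by (simp_all add: power_mult_distrib flip: power_mult)
    then show ?thesis
      by (simp add: gauss_i_squared)
  qed
  also have "\<dots> = u ^ 2 * (m ^ 4 - k ^ 2 * (one_plus_i * n) ^ 4)"
    using unit_inverse_power2[OF uv] by (simp add: power_mult_distrib one_plus_i_power4 algebra_simps)
  finally have "(x * y) ^ 2 = u ^ 2 * (m ^ 4 - k ^ 2 * (one_plus_i * n) ^ 4)" .
  moreover have "gauss_norm (x ^ 2 + y ^ 2) = 4 * gauss_norm m ^ 2"
    unfolding sum am using gauss_norm_unit[OF \<open>is_unit u\<close>] by (simp add: gauss_norm_mult gauss_norm_power)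
  moreover have "gauss_norm (x ^ 2 - y ^ 2) = 16 * gauss_norm n ^ 2"
  proof -
    have "gauss_norm v = 1" "gauss_norm k = 1"
      using uv \<open>is_unit k\<close> by (simp_all add: gauss_norm_unit) (metis dvd_triv_right gauss_norm_unit)
    then show ?thesis
      unfolding b bv by (simp add: gauss_norm_mult gauss_norm_power)
  qed
  ultimately show thesis
    using that \<open>is_unit u\<close> \<open>m \<noteq> 0\<close> \<open>n \<noteq> 0\<close> by blast
qed

lemma diff_fourth_powers_descent:
  fixes x y w k :: gauss_int
  assumes "x ^ 4 - y ^ 4 = k * w ^ 2" "is_unit k" "coprime x y" "4 dvd x ^ 2 - y ^ 2"
    and "x \<noteq> 0" "y \<noteq> 0" "w \<noteq> 0"
  obtains m n v where "m ^ 4 - k ^ 2 * n ^ 4 = v ^ 2" "m \<noteq> 0" "n \<noteq> 0" "v \<noteq> 0"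
    "2 * (gauss_norm m ^ 2 + gauss_norm n ^ 2) = gauss_norm x ^ 2 + gauss_norm y ^ 2"
proof -
  obtain u m n where "is_unit u" "m \<noteq> 0" "n \<noteq> 0"
    and xy: "(x * y) ^ 2 = u ^ 2 * (m ^ 4 - k ^ 2 * (one_plus_i * n) ^ 4)"
    and norm_sum: "gauss_norm (x ^ 2 + y ^ 2) = 4 * gauss_norm m ^ 2"
    and norm_diff: "gauss_norm (x ^ 2 - y ^ 2) = 16 * gauss_norm n ^ 2"
    using diff_fourth_powers_factorisation[OF assms(1-4,7)] by blast
  obtain v where v: "m ^ 4 - k ^ 2 * (one_plus_i * n) ^ 4 = v ^ 2" "v \<noteq> 0"
  proof (cases "u ^ 2 = 1")
    case True
    then show ?thesis
      using xy that[of "x * y"] \<open>x \<noteq> 0\<close> \<open>y \<noteq> 0\<close> by simp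
  next
    case False
    then have "u ^ 2 = -1"
      using is_unit_power2_cases[OF \<open>is_unit u\<close>] by blast
    then have "m ^ 4 - k ^ 2 * (one_plus_i * n) ^ 4 = (gauss_i * (x * y)) ^ 2"
      using xy by (simp add: gauss_i_mult_power2)
    then show ?thesis
      using that[of "gauss_i * (x * y)"] \<open>x \<noteq> 0\<close> \<open>y \<noteq> 0\<close> by simp
  qed
  have "gauss_norm (x ^ 2 + y ^ 2) + gauss_norm (x ^ 2 - y ^ 2)
      = 2 * gauss_norm x ^ 2 + 2 * gauss_norm y ^ 2"
    by (simp add: gauss_norm_parallelogram gauss_norm_power)
  then have "2 * (gauss_norm m ^ 2 + gauss_norm (one_plus_i * n) ^ 2)
      = gauss_norm x ^ 2 + gauss_norm y ^ 2"
    unfolding norm_sum norm_diff by (simp add: gauss_norm_mult power_mult_distrib)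
  with v show thesis
    using that \<open>m \<noteq> 0\<close> \<open>n \<noteq> 0\<close> by simp
qed

lemma quartic_sum_one_plus_i_power2_dvd:
  fixes x y w e :: gauss_int
  assumes eq: "x ^ 4 + e * y ^ 4 = w ^ 2"
    and x: "\<not> one_plus_i dvd x" and y: "one_plus_i dvd y"
  shows "one_plus_i ^ 2 dvd w - x ^ 2" "one_plus_i ^ 2 dvd w + x ^ 2"
proof -
  have x4: "x ^ 4 = w ^ 2 - e * y ^ 4"
    using eq by (simp add: algebra_simps)
  have y4: "one_plus_i dvd y ^ 4"
    using y by (rule dvd_trans) simp
  have w: "\<not> one_plus_i dvd w"
  proof
    assume "one_plus_i dvd w"
    then have "one_plus_i dvd w ^ 2 - e * y ^ 4"
      using y4 by (simp add: power2_eq_square)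
    then show False
      using x prime_elem_one_plus_i unfolding x4[symmetric] by (simp add: prime_elem_dvd_power_iff)
  qed
  have x2: "\<not> one_plus_i dvd x ^ 2"
    using x prime_elem_one_plus_i by (simp add: prime_elem_dvd_power_iff)
  have prod: "(w - x ^ 2) * (w + x ^ 2) = e * y ^ 4"
    using eq by (simp add: algebra_simps power2_eq_square power4_eq_xxxx)
  show "one_plus_i ^ 2 dvd w - x ^ 2"
    using one_plus_i_power2_dvd_diff[OF w x2 prod y] .
  have "one_plus_i ^ 2 dvd w - - (x ^ 2)"
    using x2 prod by (intro one_plus_i_power2_dvd_diff[OF w _ _ y, where e = e])
      (simp_all add: mult.commute)
  then show "one_plus_i ^ 2 dvd w + x ^ 2"
    by simp
qed

lemma quartic_sum_one_plus_i_split: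
  fixes x y w e :: gauss_int
  assumes eq: "x ^ 4 + e * y ^ 4 = w ^ 2" and e: "e = 1 \<or> e = -1" and cop: "coprime x y"
    and x: "\<not> one_plus_i dvd x" and y: "one_plus_i dvd y"
  obtains \<alpha> \<beta> y' where "y = one_plus_i * y'" "\<alpha> * \<beta> = e * y' ^ 4" "coprime \<alpha> \<beta>"
    "w - x ^ 2 = one_plus_i ^ 2 * \<alpha>" "w + x ^ 2 = one_plus_i ^ 2 * \<beta>"
    "\<beta> - \<alpha> = - gauss_i * x ^ 2"
proof -
  obtain \<alpha> where \<alpha>: "w - x ^ 2 = one_plus_i ^ 2 * \<alpha>"
    using quartic_sum_one_plus_i_power2_dvd(1)[OF eq x y] ..
  obtain \<beta> where \<beta>: "w + x ^ 2 = one_plus_i ^ 2 * \<beta>"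
    using quartic_sum_one_plus_i_power2_dvd(2)[OF eq x y] ..
  have x4: "x ^ 4 = w ^ 2 - e * y ^ 4"
    using eq by (simp add: algebra_simps)
  have prod: "(w - x ^ 2) * (w + x ^ 2) = e * y ^ 4"
    using eq by (simp add: algebra_simps power2_eq_square power4_eq_xxxx)
  obtain y' where y': "y = one_plus_i * y'"
    using y ..
  have "one_plus_i ^ 4 * (\<alpha> * \<beta>) = one_plus_i ^ 4 * (e * y' ^ 4)"
    using prod \<alpha> \<beta> y' by (simp add: power_mult_distrib power4_eq_xxxx power2_eq_square mult_ac)
  then have \<alpha>\<beta>: "\<alpha> * \<beta> = e * y' ^ 4"
    by (subst (asm) mult_left_cancel) simp_all
  have "one_plus_i ^ 2 * (\<alpha> + \<beta>) = one_plus_i ^ 2 * (- gauss_i * w)"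
    using \<alpha> \<beta> by (simp add: distrib_left two_eq_one_plus_i_power2 flip: \<alpha> \<beta>)
  then have sum: "\<alpha> + \<beta> = - gauss_i * w"
    by (subst (asm) mult_left_cancel) simp_all
  have "one_plus_i ^ 2 * (\<beta> - \<alpha>) = one_plus_i ^ 2 * (- gauss_i * x ^ 2)"
    using \<alpha> \<beta> by (simp add: right_diff_distrib two_eq_one_plus_i_power2 flip: \<alpha> \<beta>)
  then have diff: "\<beta> - \<alpha> = - gauss_i * x ^ 2"
    by (subst (asm) mult_left_cancel) simp_all
  have "coprime \<alpha> \<beta>"
  proof (rule coprimeI)
    fix c
    assume c: "c dvd \<alpha>" "c dvd \<beta>"
    then have "c dvd - gauss_i * w"
      unfolding sum[symmetric] by simp
    then have "c dvd w"
      by (simp add: dvd_mult_unit_iff')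
    moreover have "c dvd e * y' ^ 4"
      using c unfolding \<alpha>\<beta>[symmetric] by simp
    then have "c dvd y ^ 4"
      using e unfolding y' by (auto simp: power_mult_distrib)
    ultimately have "c dvd x ^ 4"
      unfolding x4 by (simp add: power2_eq_square)
    moreover have "coprime (x ^ 4) (y ^ 4)"
      using cop by simp
    ultimately show "is_unit c"
      using \<open>c dvd y ^ 4\<close> coprime_common_divisor by blast
  qed
  with y' \<alpha>\<beta> \<alpha> \<beta> diff show thesis
    using that by blast
qed

lemma quartic_eq_unit_times_square_obtain:
  fixes s t x e v :: gauss_int
  assumes key: "s ^ 4 - e * v ^ 2 * t ^ 4 = gauss_i * (v * x ^ 2)"
    and "is_unit v" and e: "e = 1 \<or> e = -1" and x: "\<not> one_plus_i dvd x"
  obtains r where "s ^ 4 + e * t ^ 4 = r ^ 2" "r \<noteq> 0"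
proof -
  have "x \<noteq> 0"
    using x by auto
  consider "v = 1 \<or> v = -1" | "v = gauss_i" | "v = - gauss_i"
    using \<open>is_unit v\<close> is_unit_gauss_int_iff by blast
  then show thesis
  proof cases
    case 1
    then have "s ^ 4 + (- e) * t ^ 4 = (gauss_i * v) * x ^ 2"
      using key by (auto simp: mult.assoc)
    moreover have "- e = 1 \<or> - e = -1" "gauss_i * v = gauss_i \<or> gauss_i * v = - gauss_i"
      using 1 e by auto
    ultimately have "one_plus_i dvd x"
      by (rule one_plus_i_dvd_if_quartic_eq)
    with x show thesis
      by contradiction
  next
    case 2
    then have "s ^ 4 + e * t ^ 4 = - (x ^ 2)"
      using key by (simp add: gauss_i_squared gauss_i_mult_gauss_i)
    then have "s ^ 4 + e * t ^ 4 = (gauss_i * x) ^ 2"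
      by (simp add: gauss_i_mult_power2)
    then show thesis
      using that \<open>x \<noteq> 0\<close> by simp
  next
    case 3
    then have "s ^ 4 + e * t ^ 4 = x ^ 2"
      using key by (simp add: gauss_i_squared gauss_i_mult_gauss_i)
    then show thesis
      using that \<open>x \<noteq> 0\<close> by simp
  qed
qed

lemma quartic_sum_even_parametrisation:
  fixes x y w e :: gauss_int
  assumes eq: "x ^ 4 + e * y ^ 4 = w ^ 2" and e: "e = 1 \<or> e = -1" and cop: "coprime x y"
    and x: "\<not> one_plus_i dvd x" and y: "one_plus_i dvd y" and "y \<noteq> 0"
  obtains s t r where "s ^ 4 + e * t ^ 4 = r ^ 2" "r \<noteq> 0" "y = one_plus_i * (s * t)"
    "2 * (gauss_norm s ^ 4 + gauss_norm t ^ 4) = gauss_norm w + gauss_norm x ^ 2"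
proof -
  obtain \<alpha> \<beta> y' where y': "y = one_plus_i * y'" and \<alpha>\<beta>: "\<alpha> * \<beta> = e * y' ^ 4"
    and "coprime \<alpha> \<beta>" and \<alpha>: "w - x ^ 2 = one_plus_i ^ 2 * \<alpha>"
    and \<beta>: "w + x ^ 2 = one_plus_i ^ 2 * \<beta>" and diff: "\<beta> - \<alpha> = - gauss_i * x ^ 2"
    using quartic_sum_one_plus_i_split[OF eq e cop x y] by blast
  have ee: "e * e = 1"
    using e by auto
  then have "is_unit e"
    by (metis dvd_triv_left)
  then have "coprime \<alpha> (e * \<beta>)"
    using \<open>coprime \<alpha> \<beta>\<close> by (metis coprime_mult_right_iff is_unit_right_imp_coprime)
  moreover have "\<alpha> * (e * \<beta>) = y' ^ 4"
    using \<alpha>\<beta> ee by (metis mult.assoc mult.left_commute mult_1)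
  moreover have "y' \<noteq> 0"
    using \<open>y \<noteq> 0\<close> y' by auto
  ultimately obtain u v s t where uv: "u * v = 1" and \<alpha>_eq: "\<alpha> = u * s ^ 4"
    and \<beta>_eq: "e * \<beta> = v * t ^ 4" and y'_eq: "y' = s * t"
    by (rule coprime_mult_eq_power_split[OF _ _ zero_less_numeral])
  have "is_unit u" "is_unit v"
    using uv by (metis dvd_triv_left, metis dvd_triv_right)
  have "\<beta> = e * v * t ^ 4"
    using \<beta>_eq ee by (metis mult.assoc mult_1)
  then have "v * (e * v * t ^ 4 - u * s ^ 4) = v * (- gauss_i * x ^ 2)"
    using diff \<alpha>_eq by simp
  then have key: "s ^ 4 - e * v ^ 2 * t ^ 4 = gauss_i * (v * x ^ 2)"
    using uv by (simp add: algebra_simps power2_eq_square)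
  obtain r where r: "s ^ 4 + e * t ^ 4 = r ^ 2" "r \<noteq> 0"
    using quartic_eq_unit_times_square_obtain[OF key \<open>is_unit v\<close> e x] by blast
  have "gauss_norm (w + x ^ 2) + gauss_norm (w - x ^ 2) = 2 * gauss_norm w + 2 * gauss_norm x ^ 2"
    by (simp add: gauss_norm_parallelogram gauss_norm_power)
  moreover have "gauss_norm (w - x ^ 2) = 4 * gauss_norm s ^ 4"
    unfolding \<alpha> \<alpha>_eq using gauss_norm_unit[OF \<open>is_unit u\<close>]
    by (simp add: gauss_norm_mult gauss_norm_power)
  moreover have "gauss_norm (w + x ^ 2) = 4 * gauss_norm t ^ 4"
    unfolding \<beta> \<open>\<beta> = e * v * t ^ 4\<close>
    using gauss_norm_unit[OF \<open>is_unit v\<close>] gauss_norm_unit[OF \<open>is_unit e\<close>]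
    by (simp add: gauss_norm_mult gauss_norm_power)
  ultimately have "2 * (gauss_norm s ^ 4 + gauss_norm t ^ 4) = gauss_norm w + gauss_norm x ^ 2"
    by simp
  with r show thesis
    using that y' y'_eq by blast
qed

lemma quartic_sum_even_descent:
  fixes x y w e :: gauss_int
  assumes eq: "x ^ 4 + e * y ^ 4 = w ^ 2" and e: "e = 1 \<or> e = -1" and "coprime x y"
    and x: "\<not> one_plus_i dvd x" and "one_plus_i dvd y" and "y \<noteq> 0"
  obtains s t r where "s ^ 4 + e * t ^ 4 = r ^ 2" "s \<noteq> 0" "t \<noteq> 0" "r \<noteq> 0"
    "gauss_norm s ^ 2 + gauss_norm t ^ 2 < gauss_norm x ^ 2 + gauss_norm y ^ 2"
proof -
  obtain s t r where r: "s ^ 4 + e * t ^ 4 = r ^ 2" "r \<noteq> 0" and y: "y = one_plus_i * (s * t)"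
    and norms: "2 * (gauss_norm s ^ 4 + gauss_norm t ^ 4) = gauss_norm w + gauss_norm x ^ 2"
    using quartic_sum_even_parametrisation[OF assms] by blast
  have "s \<noteq> 0" "t \<noteq> 0" "x \<noteq> 0"
    using \<open>y \<noteq> 0\<close> y x by auto
  define S where "S = gauss_norm s ^ 2"
  define T where "T = gauss_norm t ^ 2"
  define G where "G = gauss_norm x ^ 2"
  define H where "H = gauss_norm y ^ 2"
  \<comment> \<open>the triangle inequality for \<open>w\<^sup>2 = x\<^sup>4 + e y\<^sup>4\<close> together with
     \<open>|y|\<^sup>2 = 2 |s|\<^sup>2 |t|\<^sup>2\<close> bounds \<open>(S + T)\<^sup>2\<close> by \<open>G + H\<close>\<close>
  have "gauss_norm (x ^ 4) = G ^ 2" "gauss_norm (e * y ^ 4) = H ^ 2"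
    using e unfolding G_def H_def by (auto simp: gauss_norm_mult gauss_norm_power simp flip: power_mult)
  then have "gauss_norm (w ^ 2) \<le> (G + H) ^ 2"
    unfolding eq[symmetric] by (rule gauss_norm_add_le) (simp_all add: G_def H_def)
  then have "gauss_norm w ^ 2 \<le> (G + H) ^ 2"
    by (simp add: gauss_norm_power)
  then have "gauss_norm w \<le> G + H"
    by (rule power2_le_imp_le) (simp add: G_def H_def)
  moreover have "2 * (S ^ 2 + T ^ 2) = gauss_norm w + G"
    using norms unfolding S_def T_def G_def by (simp flip: power_mult)
  moreover have "H = 4 * (S * T)"
    unfolding H_def S_def T_def y by (simp add: gauss_norm_mult power_mult_distrib)
  moreover have "(S + T) ^ 2 = S ^ 2 + T ^ 2 + 2 * (S * T)"
    by (simp add: power2_sum)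
  ultimately have square_le: "(S + T) ^ 2 \<le> G + H"
    by (smt (verit))
  have "1 \<le> gauss_norm x" "1 \<le> gauss_norm y"
    using gauss_norm_pos[OF \<open>x \<noteq> 0\<close>] gauss_norm_pos[OF \<open>y \<noteq> 0\<close>] by linarith+
  then have "1 < G + H"
    unfolding G_def H_def by (smt (verit) one_le_power)
  with square_le have "S + T < G + H"
    by (rule less_if_power2_le)
  then show thesis
    using that[OF r(1) \<open>s \<noteq> 0\<close> \<open>t \<noteq> 0\<close> r(2)] by (simp add: S_def T_def G_def H_def)
qed

lemma coprime_quartic_eq_square_descent:
  fixes x y w e :: gauss_int
  assumes eq: "x ^ 4 + e * y ^ 4 = w ^ 2" and e: "e = 1 \<or> e = -1" and cop: "coprime x y"
    and "x \<noteq> 0" "y \<noteq> 0" "w \<noteq> 0"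
  obtains s t r where "s ^ 4 + e * t ^ 4 = r ^ 2" "s \<noteq> 0" "t \<noteq> 0" "r \<noteq> 0"
    "gauss_norm s ^ 2 + gauss_norm t ^ 2 < gauss_norm x ^ 2 + gauss_norm y ^ 2"
proof -
  have "\<not> (one_plus_i dvd x \<and> one_plus_i dvd y)"
    using cop prime_elem_not_unit[OF prime_elem_one_plus_i] coprime_common_divisor by blast
  then consider "\<not> one_plus_i dvd x" "\<not> one_plus_i dvd y"
    | "\<not> one_plus_i dvd x" "one_plus_i dvd y"
    | "one_plus_i dvd x" "\<not> one_plus_i dvd y"
    by blast
  then show thesis
  proof cases
    case 1
    then have "e = -1"
      using sum_fourth_powers_neq_square eq e by auto
    obtain y' where y': "y' = y \<or> y' = gauss_i * y" "4 dvd x ^ 2 - y' ^ 2"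
      using four_dvd_diff_squares_up_to_gauss_i[OF 1] .
    then have "y' ^ 4 = y ^ 4" "gauss_norm y' = gauss_norm y" "y' \<noteq> 0" "coprime x y'"
      using cop \<open>y \<noteq> 0\<close> is_unit_power4[OF is_unit_gauss_i]
      by (auto simp: power_mult_distrib coprime_mult_right_iff is_unit_right_imp_coprime)
    then have "x ^ 4 - y' ^ 4 = 1 * w ^ 2"
      using eq \<open>e = -1\<close> by simp
    then obtain m n r where "m ^ 4 - 1 ^ 2 * n ^ 4 = r ^ 2" "m \<noteq> 0" "n \<noteq> 0" "r \<noteq> 0"
      and norms: "2 * (gauss_norm m ^ 2 + gauss_norm n ^ 2) = gauss_norm x ^ 2 + gauss_norm y' ^ 2"
      using diff_fourth_powers_descent[OF _ one_dvd \<open>coprime x y'\<close> y'(2)]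
        \<open>x \<noteq> 0\<close> \<open>y' \<noteq> 0\<close> \<open>w \<noteq> 0\<close>
      by blast
    moreover have "m ^ 4 + e * n ^ 4 = r ^ 2"
      using \<open>m ^ 4 - 1 ^ 2 * n ^ 4 = r ^ 2\<close> \<open>e = -1\<close> by simp
    moreover have "gauss_norm m ^ 2 + gauss_norm n ^ 2 < gauss_norm x ^ 2 + gauss_norm y ^ 2"
      using norms[unfolded \<open>gauss_norm y' = gauss_norm y\<close>] zero_le_power2[of "gauss_norm y"]
        zero_less_power[OF gauss_norm_pos[OF \<open>x \<noteq> 0\<close>], of 2]
      by (smt (verit))
    ultimately show thesis
      using that by blast
  next
    case 2
    then show thesis
      by (rule quartic_sum_even_descent[OF eq e cop _ _ \<open>y \<noteq> 0\<close>]) (rule that)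
  next
    case 3
    define w' where "w' = (if e = 1 then w else gauss_i * w)"
    have "y ^ 4 + e * x ^ 4 = w' ^ 2"
      using eq e by (auto simp: w'_def power_mult_distrib gauss_i_squared algebra_simps)
    moreover have "w' \<noteq> 0"
      using \<open>w \<noteq> 0\<close> by (simp add: w'_def)
    moreover note quartic_sum_even_descent[OF _ e _ _ _ \<open>x \<noteq> 0\<close>]
    ultimately show thesis
      using that 3 cop by (metis add.commute coprime_commute)
  qed
qed

lemma quartic_eq_square_descent:
  fixes x y w e :: gauss_int
  assumes eq: "x ^ 4 + e * y ^ 4 = w ^ 2" and e: "e = 1 \<or> e = -1"
    and "x \<noteq> 0" "y \<noteq> 0" "w \<noteq> 0"
  obtains s t r where "s ^ 4 + e * t ^ 4 = r ^ 2" "s \<noteq> 0" "t \<noteq> 0" "r \<noteq> 0"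
    "gauss_norm s ^ 2 + gauss_norm t ^ 2 < gauss_norm x ^ 2 + gauss_norm y ^ 2"
proof (cases "coprime x y")
  case True
  then show thesis
    using coprime_quartic_eq_square_descent[OF assms(1,2) True assms(3-5)] that by blast
next
  case False
  define g where "g = gcd x y"
  have "x ^ 4 + e * y ^ 4 = 1 * w ^ 2"
    using eq by simp
  then obtain x' y' w' where x': "x = g * x'" and y': "y = g * y'" and w': "w = g ^ 2 * w'"
    and eq': "x' ^ 4 + e * y' ^ 4 = 1 * w' ^ 2"
    using quartic_eq_divide_gcd[OF _ one_dvd \<open>x \<noteq> 0\<close>] unfolding g_def by blast
  have "x' \<noteq> 0" "y' \<noteq> 0" "w' \<noteq> 0" "g \<noteq> 0"
    using assms(3-5) x' y' w' by auto
  have "\<not> is_unit g"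
    using False unfolding g_def by (metis is_unit_gcd)
  then have "2 \<le> gauss_norm g"
    using \<open>g \<noteq> 0\<close> by (rule gauss_norm_ge_2[rotated])
  then have "gauss_norm x' < gauss_norm x" "gauss_norm y' \<le> gauss_norm y"
    using gauss_norm_pos[OF \<open>x' \<noteq> 0\<close>] gauss_norm_nonneg[of y'] unfolding x' y'
    by (simp_all add: gauss_norm_mult mult_le_cancel_right1 mult_less_cancel_right1 not_less)
  then have "gauss_norm x' ^ 2 + gauss_norm y' ^ 2 < gauss_norm x ^ 2 + gauss_norm y ^ 2"
    by (smt (verit) gauss_norm_nonneg power_mono power_strict_mono zero_less_numeral)
  with eq' \<open>x' \<noteq> 0\<close> \<open>y' \<noteq> 0\<close> \<open>w' \<noteq> 0\<close> show thesis
    using that by simp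
qed

lemma quartic_eq_square_trivial:
  fixes x y w e :: gauss_int
  assumes "x ^ 4 + e * y ^ 4 = w ^ 2" "e = 1 \<or> e = -1"
  shows "x * y * w = 0"
  using assms
proof (induction "nat (gauss_norm x ^ 2 + gauss_norm y ^ 2)" arbitrary: x y w rule: less_induct)
  case less
  show ?case
  proof (rule ccontr)
    assume "x * y * w \<noteq> 0"
    then have "x \<noteq> 0" "y \<noteq> 0" "w \<noteq> 0"
      by auto
    then obtain s t r where "s ^ 4 + e * t ^ 4 = r ^ 2" "s * t * r \<noteq> 0"
      and "gauss_norm s ^ 2 + gauss_norm t ^ 2 < gauss_norm x ^ 2 + gauss_norm y ^ 2"
      by (rule quartic_eq_square_descent[OF less.prems]) simp
    with less.hyps less.prems(2) show False
      by (smt (verit) gauss_norm_nonneg nat_less_eq_zless zero_le_power2)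
  qed
qed

section \<open>The equations x^4 -+ y^4 = i z^2\<close>

lemma diff_fourth_powers_eq_gauss_i_square_trivial:
  fixes x y z :: gauss_int
  assumes "x ^ 4 - y ^ 4 = gauss_i * z ^ 2"
  shows "x * y * z = 0"
proof (rule ccontr)
  assume "x * y * z \<noteq> 0"
  then have "x \<noteq> 0" "y \<noteq> 0" "z \<noteq> 0"
    by auto
  have "x ^ 4 + (-1) * y ^ 4 = gauss_i * z ^ 2"
    using assms by simp
  then obtain x' y' z' where "x = gcd x y * x'" "y = gcd x y * y'" "z = gcd x y ^ 2 * z'"
    and cop: "coprime x' y'" and eq: "x' ^ 4 + (-1) * y' ^ 4 = gauss_i * z' ^ 2"
    using quartic_eq_divide_gcd[OF _ is_unit_gauss_i \<open>x \<noteq> 0\<close>] by blast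
  then have "x' \<noteq> 0" "y' \<noteq> 0" "z' \<noteq> 0"
    using \<open>x \<noteq> 0\<close> \<open>y \<noteq> 0\<close> \<open>z \<noteq> 0\<close> by auto
  have "\<not> one_plus_i dvd x'" "\<not> one_plus_i dvd y'"
    using coprime_quartic_eq_gauss_i_not_one_plus_i_dvd[OF eq _ cop] by simp_all
  then obtain y'' where y'': "y'' = y' \<or> y'' = gauss_i * y'" "4 dvd x' ^ 2 - y'' ^ 2"
    by (rule four_dvd_diff_squares_up_to_gauss_i)
  then have "y'' ^ 4 = y' ^ 4" "y'' \<noteq> 0" "coprime x' y''"
    using cop \<open>y' \<noteq> 0\<close> is_unit_power4[OF is_unit_gauss_i]
    by (auto simp: power_mult_distrib coprime_mult_right_iff is_unit_right_imp_coprime)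
  then have "x' ^ 4 - y'' ^ 4 = gauss_i * z' ^ 2"
    using eq by simp
  then obtain m n r where "m ^ 4 - gauss_i ^ 2 * n ^ 4 = r ^ 2" "m \<noteq> 0" "n \<noteq> 0" "r \<noteq> 0"
    using diff_fourth_powers_descent[OF _ is_unit_gauss_i \<open>coprime x' y''\<close> y''(2)]
      \<open>x' \<noteq> 0\<close> \<open>y'' \<noteq> 0\<close> \<open>z' \<noteq> 0\<close>
    by blast
  moreover from this have "m * n * r = 0"
    by (intro quartic_eq_square_trivial[of m 1 n r]) (simp_all add: gauss_i_squared)
  ultimately show False
    by simp
qed

lemma power2_eq_minus_two_gauss_i_iff:
  "z ^ 2 = - 2 * gauss_i \<longleftrightarrow> z = Gauss_Int (-1) 1 \<or> z = Gauss_Int 1 (-1)"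
proof
  assume "z ^ 2 = - 2 * gauss_i"
  then have "ImZ (z ^ 2) = ImZ (- 2 * gauss_i)"
    by simp
  then have "2 * ReZ z * ImZ z = -2"
    by (simp add: ImZ_power2)
  then have "ReZ z * ImZ z = -1"
    by (simp add: ac_simps)
  then have "ReZ z = 1 \<and> ImZ z = -1 \<or> ReZ z = -1 \<and> ImZ z = 1"
    by (auto simp: zmult_eq_neg1_iff)
  then show "z = Gauss_Int (-1) 1 \<or> z = Gauss_Int 1 (-1)"
    by (auto simp: gauss_int_eq_iff)
qed (auto simp: gauss_int_eq_iff power2_eq_square)

lemma coprime_sum_fourth_powers_eq_gauss_i_square_units:
  fixes x y z :: gauss_int
  assumes eq: "x ^ 4 + y ^ 4 = gauss_i * z ^ 2" and cop: "coprime x y"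
    and "x \<noteq> 0" "y \<noteq> 0" "z \<noteq> 0"
  shows "is_unit x" "is_unit y"
proof -
  have eq1: "x ^ 4 + 1 * y ^ 4 = gauss_i * z ^ 2"
    using eq by simp
  have x: "\<not> one_plus_i dvd x" and y: "\<not> one_plus_i dvd y"
    using coprime_quartic_eq_gauss_i_not_one_plus_i_dvd[OF eq1 _ cop] by simp_all
  have "one_plus_i dvd z"
    using one_plus_i_dvd_if_quartic_eq[OF eq1] by simp
  then obtain w where w: "z = one_plus_i * w" ..
  have "2 dvd x ^ 4 - y ^ 4"
    using x y power4_mod4[of x] power4_mod4[of y] even_ImZ_power4[of x] even_ImZ_power4[of y]
    by (simp add: numeral_dvd_gauss_int_iff) presburger
  then obtain v where v: "x ^ 4 - y ^ 4 = 2 * v" ..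
  have "one_plus_i ^ 4 * ((x * y) ^ 4 - w ^ 4) = one_plus_i ^ 4 * (- gauss_i * v) ^ 2"
  proof -
    have "one_plus_i ^ 4 * (- gauss_i * v) ^ 2 = (x ^ 4 - y ^ 4) ^ 2"
      unfolding v two_eq_one_plus_i_power2
      by (simp add: power_mult_distrib gauss_i_squared flip: power_mult)
    also have "\<dots> = (x ^ 4 + y ^ 4) ^ 2 - 4 * (x * y) ^ 4"
      by (simp add: power_mult_distrib power2_eq_square algebra_simps)
    also have "\<dots> = one_plus_i ^ 4 * ((x * y) ^ 4 - w ^ 4)"
      unfolding eq w by (simp add: power_mult_distrib gauss_i_squared one_plus_i_power4
          algebra_simps flip: power_mult)
    finally show ?thesis ..
  qed
  then have "(x * y) ^ 4 + (-1) * w ^ 4 = (- gauss_i * v) ^ 2"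
    by simp
  then have "(x * y) * w * (- gauss_i * v) = 0"
    by (rule quartic_eq_square_trivial) simp
  then have x4: "x ^ 4 = y ^ 4"
    using v \<open>x \<noteq> 0\<close> \<open>y \<noteq> 0\<close> \<open>z \<noteq> 0\<close> w by auto
  have "x dvd y ^ 4" "y dvd x ^ 4"
    using x4 by (metis dvd_power dvd_refl zero_less_numeral)+
  moreover have "coprime x (y ^ 4)" "coprime y (x ^ 4)"
    using cop by (simp_all add: coprime_commute)
  ultimately show "is_unit x" "is_unit y"
    by (meson coprime_common_divisor dvd_refl)+
qed

lemma sum_fourth_powers_eq_gauss_i_square_iff:
  fixes x y z :: gauss_int
  shows "(x ^ 4 + y ^ 4 = gauss_i * z ^ 2 \<and> x * y * z \<noteq> 0 \<and>
          (\<forall>d. d dvd x \<and> d dvd y \<and> d dvd z \<longrightarrow> is_unit d))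
     \<longleftrightarrow> is_unit x \<and> is_unit y \<and> (z = Gauss_Int (-1) 1 \<or> z = Gauss_Int 1 (-1))"
proof
  assume "x ^ 4 + y ^ 4 = gauss_i * z ^ 2 \<and> x * y * z \<noteq> 0 \<and>
          (\<forall>d. d dvd x \<and> d dvd y \<and> d dvd z \<longrightarrow> is_unit d)"
  then have eq: "x ^ 4 + 1 * y ^ 4 = gauss_i * z ^ 2" and "x \<noteq> 0" "y \<noteq> 0" "z \<noteq> 0"
    and common: "\<And>d. d dvd x \<Longrightarrow> d dvd y \<Longrightarrow> d dvd z \<Longrightarrow> is_unit d"
    by auto
  obtain z' where "z = gcd x y ^ 2 * z'"
    using quartic_eq_divide_gcd[OF eq is_unit_gauss_i \<open>x \<noteq> 0\<close>] by blast
  then have "gcd x y dvd z"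
    by (simp add: power2_eq_square mult.assoc)
  then have "coprime x y"
    using common by (metis gcd_dvd1 gcd_dvd2 is_unit_gcd)
  then have "is_unit x" "is_unit y"
    using coprime_sum_fourth_powers_eq_gauss_i_square_units eq \<open>x \<noteq> 0\<close> \<open>y \<noteq> 0\<close> \<open>z \<noteq> 0\<close>
    by simp_all
  moreover from this have "z ^ 2 = - 2 * gauss_i"
    using eq is_unit_power4 by (simp add: gauss_int_eq_iff)
  ultimately show "is_unit x \<and> is_unit y \<and> (z = Gauss_Int (-1) 1 \<or> z = Gauss_Int 1 (-1))"
    using power2_eq_minus_two_gauss_i_iff by blast
next
  assume units: "is_unit x \<and> is_unit y \<and> (z = Gauss_Int (-1) 1 \<or> z = Gauss_Int 1 (-1))"
  then have "z ^ 2 = - 2 * gauss_i"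
    using power2_eq_minus_two_gauss_i_iff by blast
  then have "x ^ 4 + y ^ 4 = gauss_i * z ^ 2"
    using units is_unit_power4 by (simp add: gauss_int_eq_iff)
  moreover have "x \<noteq> 0" "y \<noteq> 0" "z \<noteq> 0"
    using units by (auto simp: gauss_int_eq_iff)
  moreover have "is_unit d" if "d dvd x" for d
    using units that by (blast intro: dvd_unit_imp_unit)
  ultimately show "x ^ 4 + y ^ 4 = gauss_i * z ^ 2 \<and> x * y * z \<noteq> 0 \<and>
          (\<forall>d. d dvd x \<and> d dvd y \<and> d dvd z \<longrightarrow> is_unit d)"
    by simp
qed

section \<open>Transfer to the complex numbers\<close>

definition complex_of_gauss_int :: "gauss_int \<Rightarrow> complex" where
  "complex_of_gauss_int z = of_int (ReZ z) + of_int (ImZ z) * \<i>"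

lemma complex_of_gauss_int_eq_iff [simp]: "complex_of_gauss_int a = complex_of_gauss_int b \<longleftrightarrow> a = b"
  by (auto simp: complex_of_gauss_int_def complex_eq_iff gauss_int_eq_iff)

lemma complex_of_gauss_int_simps [simp]:
  "complex_of_gauss_int (a + b) = complex_of_gauss_int a + complex_of_gauss_int b"
  "complex_of_gauss_int (a * b) = complex_of_gauss_int a * complex_of_gauss_int b"
  "complex_of_gauss_int (- a) = - complex_of_gauss_int a"
  "complex_of_gauss_int 0 = 0" "complex_of_gauss_int 1 = 1" "complex_of_gauss_int gauss_i = \<i>"
  by (simp_all add: complex_of_gauss_int_def complex_eq_iff)

lemma complex_of_gauss_int_diff [simp]:
  "complex_of_gauss_int (a - b) = complex_of_gauss_int a - complex_of_gauss_int b"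
  by (simp add: complex_of_gauss_int_def complex_eq_iff)

lemma complex_of_gauss_int_power [simp]: "complex_of_gauss_int (a ^ n) = complex_of_gauss_int a ^ n"
  by (induction n) simp_all

lemma complex_of_gauss_int_eq_0_iff [simp]: "complex_of_gauss_int a = 0 \<longleftrightarrow> a = 0"
  using complex_of_gauss_int_eq_iff[of a 0] by simp

lemma gauss_ints_eq_range: "gauss_ints = range complex_of_gauss_int"
  by (force simp: gauss_ints_def complex_of_gauss_int_def intro: range_eqI[of _ _ "Gauss_Int _ _"])

lemma gdvd_complex_of_gauss_int_iff:
  "gdvd (complex_of_gauss_int d) (complex_of_gauss_int x) \<longleftrightarrow> d dvd x"
  unfolding gdvd_def gauss_ints_eq_range dvd_def
  by (auto simp flip: complex_of_gauss_int_simps(2))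

lemma gunit_complex_of_gauss_int_iff: "gunit (complex_of_gauss_int u) \<longleftrightarrow> is_unit u"
  using gdvd_complex_of_gauss_int_iff[of u 1] by (simp add: gunit_def gauss_ints_eq_range)

lemma gcoprime3_complex_of_gauss_int_iff:
  "gcoprime3 (complex_of_gauss_int x) (complex_of_gauss_int y) (complex_of_gauss_int z)
     \<longleftrightarrow> (\<forall>d. d dvd x \<and> d dvd y \<and> d dvd z \<longrightarrow> is_unit d)"
  by (simp add: gcoprime3_def gauss_ints_eq_range gdvd_complex_of_gauss_int_iff
      gunit_complex_of_gauss_int_iff)

lemma complex_of_gauss_int_in_units_iff:
  "complex_of_gauss_int u \<in> {\<i>, -\<i>, 1, -1} \<longleftrightarrow> is_unit u"
  using complex_of_gauss_int_eq_iff[of u gauss_i] complex_of_gauss_int_eq_iff[of u "- gauss_i"]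
    complex_of_gauss_int_eq_iff[of u 1] complex_of_gauss_int_eq_iff[of u "-1"]
  by (auto simp: is_unit_gauss_int_iff)

lemma complex_of_gauss_int_eq_plus_minus_i_one_plus_i_iff:
  "complex_of_gauss_int z \<in> {\<i> * (1 + \<i>), - (\<i> * (1 + \<i>))}
     \<longleftrightarrow> z = Gauss_Int (-1) 1 \<or> z = Gauss_Int 1 (-1)"
proof -
  have "\<i> * (1 + \<i>) = complex_of_gauss_int (Gauss_Int (-1) 1)"
    "- (\<i> * (1 + \<i>)) = complex_of_gauss_int (Gauss_Int 1 (-1))"
    by (simp_all add: complex_of_gauss_int_def complex_eq_iff)
  then show ?thesis
    by auto
qed

lemma complex_of_gauss_int_quartic_eq_iff:
  "complex_of_gauss_int x ^ 4 + complex_of_gauss_int e * complex_of_gauss_int y ^ 4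
     = \<i> * complex_of_gauss_int z ^ 2 \<longleftrightarrow> x ^ 4 + e * y ^ 4 = gauss_i * z ^ 2"
  using complex_of_gauss_int_eq_iff[of "x ^ 4 + e * y ^ 4" "gauss_i * z ^ 2"] by simp

theorem theorem1:
  shows "(\<forall>x\<in>gauss_ints. \<forall>y\<in>gauss_ints. \<forall>z\<in>gauss_ints.
            x ^ 4 - y ^ 4 = \<i> * z ^ 2 \<longrightarrow> x * y * z = 0)
       \<and> (\<forall>x\<in>gauss_ints. \<forall>y\<in>gauss_ints. \<forall>z\<in>gauss_ints.
            (x ^ 4 + y ^ 4 = \<i> * z ^ 2 \<and> x * y * z \<noteq> 0 \<and> gcoprime3 x y z)
            \<longleftrightarrow> (x \<in> {\<i>, -\<i>, 1, -1} \<and> y \<in> {\<i>, -\<i>, 1, -1}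
                 \<and> z \<in> {\<i> * (1 + \<i>), - (\<i> * (1 + \<i>))}))"
proof -
  let ?c = complex_of_gauss_int
  have part_i: "?c x ^ 4 - ?c y ^ 4 = \<i> * ?c z ^ 2 \<longrightarrow> ?c x * ?c y * ?c z = 0" for x y z
    using diff_fourth_powers_eq_gauss_i_square_trivial[of x y z]
      complex_of_gauss_int_quartic_eq_iff[of x "-1" y z]
    by simp
  have part_ii: "(?c x ^ 4 + ?c y ^ 4 = \<i> * ?c z ^ 2 \<and> ?c x * ?c y * ?c z \<noteq> 0
                   \<and> gcoprime3 (?c x) (?c y) (?c z))
       \<longleftrightarrow> (?c x \<in> {\<i>, -\<i>, 1, -1} \<and> ?c y \<in> {\<i>, -\<i>, 1, -1}
            \<and> ?c z \<in> {\<i> * (1 + \<i>), - (\<i> * (1 + \<i>))})" for x y z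
    using sum_fourth_powers_eq_gauss_i_square_iff[of x y z]
      complex_of_gauss_int_quartic_eq_iff[of x 1 y z]
    unfolding gcoprime3_complex_of_gauss_int_iff complex_of_gauss_int_in_units_iff
      complex_of_gauss_int_eq_plus_minus_i_one_plus_i_iff
    by simp
  show ?thesis
    unfolding gauss_ints_eq_range using part_i part_ii by auto
qed

end
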